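(* Let $\mathfrak{A}$ be a sheaf of metric structures over a topological space $X$, let $\mathbb{F}$ be a filter of open subsets of $X$, and let $(\sigma_n)_{n}$ be a sequence of sections, all defined on an open set $U\in\mathbb{F}$, which is Cauchy with respect to the pseudometric $\rho_{\mathbb{F}}$. Then: (1) there exists a function $\mu_\infty$ defined on $U$ with $\mu_\infty(x)\in E_x$ for all $x\in U$ (not necessarily continuous) such that $\lim_{n\to\infty}\rho_{\mathbb{F}}(\sigma_n,\mu_\infty)=0$, where $\rho_{\mathbb{F}}$ is extended to such functions by the same formula; (2) if moreover $X$ is a regular topological space and the interior (in $E$) of the image of $\mu_\infty$ is nonempty, then there exists an open set $V\subseteq U$ such that $\mu_\infty\upharpoonright V$ is continuous.
   Context: A topological sheaf over $X$ is a pair $(E,p)$ with $p:E\to X$ a local homeomorphism; a section is a continuous $\sigma:U\to E$, $U\subseteq X$ open, with $p\circ\sigma=\mathrm{Id}_U$; $E_x=p^{-1}(x)$. A sheaf of metric structures $\mathfrak{A}$ on $X$ is such a sheaf where each fiber $E_x$ is the universe of a metric structure (in continuous logic) for a fixed metric signature, with $(E_x,d_x)$ a complete metric space of diameter $1$, and where the interpretations of predicates, functions, and the distance $d^{\mathfrak{A}}=\bigcup_x d_x$ are continuous on $\bigcup_x E_x^n$ (topologized by the basic open sets $\langle\sigma_1,\dots,\sigma_n\rangle=\{(\sigma_1(y),\dots,\sigma_n(y))\}$), constants are continuous global sections, and moduli of uniform continuity have positive infimum over $x$ at each $\varepsilon>0$. A filter of open sets is a nonempty family of nonempty open sets closed under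 finite intersections and open supersets. For $\sigma,\mu$ with domains in $\mathbb{F}$, $\mathbb{F}_{\sigma\mu}=\{W\cap\mathrm{dom}(\sigma)\cap\mathrm{dom}(\mu):W\in\mathbb{F}\}$ and $\rho_{\mathbb{F}}(\sigma,\mu)=\inf_{W\in\mathbb{F}_{\sigma\mu}}\sup_{x\in W}d_x(\sigma(x),\mu(x))$. *)

theory Defs
  imports "HOL-Analysis.Analysis"
begin

definition local_homeomorphism :: "'e topology \<Rightarrow> 'x topology \<Rightarrow> ('e \<Rightarrow> 'x) \<Rightarrow> bool" where
  "local_homeomorphism E X p \<longleftrightarrow>
     continuous_map E X p \<and>
     (\<forall>e\<in>topspace E. \<exists>W. openin E W \<and> e \<in> W \<and> openin X (p ` W) \<and>
        homeomorphic_map (subtopology E W) (subtopology X (p ` W)) p)"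

definition fiber :: "'e topology \<Rightarrow> ('e \<Rightarrow> 'x) \<Rightarrow> 'x \<Rightarrow> 'e set" where
  "fiber E p x = {e \<in> topspace E. p e = x}"

definition is_section :: "'x topology \<Rightarrow> 'e topology \<Rightarrow> ('e \<Rightarrow> 'x) \<Rightarrow> 'x set \<Rightarrow> ('x \<Rightarrow> 'e) \<Rightarrow> bool" where
  "is_section X E p U \<sigma> \<longleftrightarrow> openin X U \<and> continuous_map (subtopology X U) E \<sigma> \<and> (\<forall>y\<in>U. p (\<sigma> y) = y)"

text \<open>The topology on the union over x of E_x^n (n-tuples as lists of length n),
  generated by the basic open sets of the form
  the set of all tuples (sigma_1(y),...,sigma_n(y)) with y in U,
  for sections sigma_1,...,sigma_n on a common open domain U.\<close>
definition fiber_power_top :: "'x topology \<Rightarrow> 'e topology \<Rightarrow> ('e \<Rightarrow> 'x) \<Rightarrow> nat \<Rightarrow> 'e list topology" where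
  "fiber_power_top X E p n = topology_generated_by
     {{map (\<lambda>\<sigma>. \<sigma> y) ss | y. y \<in> U} | U ss.
        length ss = n \<and> (\<forall>\<sigma>\<in>set ss. is_section X E p U \<sigma>)}"

definition fiber_tuples :: "'e topology \<Rightarrow> ('e \<Rightarrow> 'x) \<Rightarrow> 'x \<Rightarrow> nat \<Rightarrow> 'e list set" where
  "fiber_tuples E p x n = {as. length as = n \<and> set as \<subseteq> fiber E p x}"

text \<open>A sheaf of metric structures over X for a metric signature with predicate
  symbols of type 'r (arity arP, interpretation P), function symbols of type 'f
  (arity arF \<ge> 1, interpretation F) and constant symbols of type 'c
  (interpretation C, a global section).\<close>
definition sheaf_metric_structure ::
  "'x topology \<Rightarrow> 'e topology \<Rightarrow> ('e \<Rightarrow> 'x) \<Rightarrow> ('e \<Rightarrow> 'e \<Rightarrow> real) \<Rightarrow>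
   ('r \<Rightarrow> nat) \<Rightarrow> ('r \<Rightarrow> 'e list \<Rightarrow> real) \<Rightarrow>
   ('f \<Rightarrow> nat) \<Rightarrow> ('f \<Rightarrow> 'e list \<Rightarrow> 'e) \<Rightarrow> ('c \<Rightarrow> 'x \<Rightarrow> 'e) \<Rightarrow> bool" where
  "sheaf_metric_structure X E p d arP P arF F C \<longleftrightarrow>
     local_homeomorphism E X p \<and>
     (\<forall>x\<in>topspace X. fiber E p x \<noteq> {} \<and>
        Metric_space (fiber E p x) d \<and> Metric_space.mcomplete (fiber E p x) d \<and>
        (\<forall>a\<in>fiber E p x. \<forall>b\<in>fiber E p x. d a b \<le> 1)) \<and>
     continuous_map (fiber_power_top X E p 2) euclideanreal (\<lambda>as. d (as!0) (as!1)) \<and>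
     (\<forall>r. continuous_map (fiber_power_top X E p (arP r)) euclideanreal (P r) \<and>
        (\<forall>x\<in>topspace X. \<forall>as\<in>fiber_tuples E p x (arP r). 0 \<le> P r as \<and> P r as \<le> 1) \<and>
        (\<forall>\<epsilon>>0. \<exists>\<delta>>0. \<forall>x\<in>topspace X. \<forall>as\<in>fiber_tuples E p x (arP r).
            \<forall>bs\<in>fiber_tuples E p x (arP r).
            (\<forall>i<arP r. d (as!i) (bs!i) < \<delta>) \<longrightarrow> \<bar>P r as - P r bs\<bar> \<le> \<epsilon>)) \<and>
     (\<forall>f. 0 < arF f \<and> continuous_map (fiber_power_top X E p (arF f)) E (F f) \<and>
        (\<forall>x\<in>topspace X. \<forall>as\<in>fiber_tuples E p x (arF f). F f as \<in> fiber E p x) \<and>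
        (\<forall>\<epsilon>>0. \<exists>\<delta>>0. \<forall>x\<in>topspace X. \<forall>as\<in>fiber_tuples E p x (arF f).
            \<forall>bs\<in>fiber_tuples E p x (arF f).
            (\<forall>i<arF f. d (as!i) (bs!i) < \<delta>) \<longrightarrow> d (F f as) (F f bs) \<le> \<epsilon>)) \<and>
     (\<forall>c. is_section X E p (topspace X) (C c))"

definition open_filter :: "'x topology \<Rightarrow> 'x set set \<Rightarrow> bool" where
  "open_filter X \<F> \<longleftrightarrow> \<F> \<noteq> {} \<and>
     (\<forall>W\<in>\<F>. openin X W \<and> W \<noteq> {}) \<and>
     (\<forall>W1\<in>\<F>. \<forall>W2\<in>\<F>. W1 \<inter> W2 \<in> \<F>) \<and>
     (\<forall>W\<in>\<F>. \<forall>W'. openin X W' \<and> W \<subseteq> W' \<longrightarrow> W' \<in> \<F>)"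

definition rhoF :: "'x set set \<Rightarrow> ('e \<Rightarrow> 'e \<Rightarrow> real) \<Rightarrow> 'x set \<Rightarrow> ('x \<Rightarrow> 'e) \<Rightarrow> 'x set \<Rightarrow> ('x \<Rightarrow> 'e) \<Rightarrow> real" where
  "rhoF \<F> d Us \<sigma> Um \<mu> =
     Inf {(SUP x\<in>W'. d (\<sigma> x) (\<mu> x)) | W'. \<exists>W\<in>\<F>. W' = W \<inter> Us \<inter> Um}"

end

theory Submission
  imports Defs
begin

text \<open>Pass to a subsequence \<open>\<sigma> (N k)\<close> whose consecutive terms are \<open>\<rho>\<^sub>\<F>\<close>-closer than
  \<open>(1/2)^k\<close>. Then they are pointwise \<open>(1/2)^k\<close>-close on some \<open>W\<^sub>k \<in> \<F>\<close>, so along the decreasing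
  chain \<open>T\<^sub>j = U \<inter> W\<^sub>0 \<inter> \<dots> \<inter> W\<^sub>j\<^sub>-\<^sub>1\<close> of members of \<open>\<F>\<close> the subsequence is geometrically Cauchy
  in every fibre. Completeness of the fibres yields a pointwise limit \<open>\<mu>\<close> with
  \<open>d (\<sigma> (N j) x) (\<mu> x) \<le> 2 * (1/2)^j\<close> on \<open>T\<^sub>j\<close>, and the triangle inequality bounds \<open>\<rho>\<^sub>\<F>(\<sigma>\<^sub>n, \<mu>)\<close>.
  For continuity, take an interior point \<open>e\<close> of \<open>\<mu> ` U\<close> and a neighbourhood \<open>W\<close> of \<open>e\<close> on which
  \<open>p\<close> is a homeomorphism: on the open set \<open>p ` (W \<inter> interior (\<mu> ` U))\<close> the function \<open>\<mu>\<close>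
  coincides with the continuous inverse of \<open>p\<close>.\<close>

lemma open_filter_Int:
  "open_filter X \<F> \<Longrightarrow> V \<in> \<F> \<Longrightarrow> W \<in> \<F> \<Longrightarrow> V \<inter> W \<in> \<F>"
  unfolding open_filter_def by blast

lemma open_filter_Int_nonempty:
  "open_filter X \<F> \<Longrightarrow> V \<in> \<F> \<Longrightarrow> W \<in> \<F> \<Longrightarrow> V \<inter> W \<noteq> {}"
  unfolding open_filter_def by blast

lemma rhoF_common_domain:
  "rhoF \<F> d U f U g = Inf ((\<lambda>W. SUP x\<in>W \<inter> U. d (f x) (g x)) ` \<F>)"
  unfolding rhoF_def by (rule arg_cong[where f = Inf]) (auto simp: Int_assoc)

context
  fixes \<F> :: "'x set set" and U :: "'x set" and d :: "'e \<Rightarrow> 'e \<Rightarrow> real"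
    and f g :: "'x \<Rightarrow> 'e" and B :: real
  assumes U: "U \<in> \<F>"
    and dist_bounded: "\<forall>x\<in>U. 0 \<le> d (f x) (g x) \<and> d (f x) (g x) \<le> B"
begin

private lemma bdd_above_dist: "bdd_above ((\<lambda>x. d (f x) (g x)) ` (W \<inter> U))"
  using dist_bounded by (intro bdd_aboveI[of _ B]) auto

lemma rhoF_less_imp_eventually_less:
  assumes "rhoF \<F> d U f U g < \<epsilon>"
  shows "\<exists>W\<in>\<F>. \<forall>x\<in>W \<inter> U. d (f x) (g x) < \<epsilon>"
proof -
  have "(\<lambda>W. SUP x\<in>W \<inter> U. d (f x) (g x)) ` \<F> \<noteq> {}"
    using U by blast
  from cInf_lessD[OF this] assms
  obtain W where W: "W \<in> \<F>" and less: "(SUP x\<in>W \<inter> U. d (f x) (g x)) < \<epsilon>"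
    unfolding rhoF_common_domain by blast
  have "d (f x) (g x) < \<epsilon>" if "x \<in> W \<inter> U" for x
    using cSUP_upper[OF that bdd_above_dist] less by linarith
  with W show ?thesis by blast
qed

context
  fixes X :: "'x topology"
  assumes filt: "open_filter X \<F>"
begin

private lemma SUP_dist_nonneg:
  assumes "W \<in> \<F>" shows "0 \<le> (SUP x\<in>W \<inter> U. d (f x) (g x))"
proof -
  obtain x where x: "x \<in> W \<inter> U"
    using open_filter_Int_nonempty[OF filt assms U] by blast
  then show ?thesis
    using cSUP_upper[OF x bdd_above_dist] dist_bounded by force
qed

lemma rhoF_nonneg: "0 \<le> rhoF \<F> d U f U g"
  unfolding rhoF_common_domain using U SUP_dist_nonneg by (intro cInf_greatest) auto

lemma rhoF_le_if_eventually_le: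
  assumes W: "W \<in> \<F>" and le: "\<forall>x\<in>W \<inter> U. d (f x) (g x) \<le> c"
  shows "rhoF \<F> d U f U g \<le> c"
proof -
  have "rhoF \<F> d U f U g \<le> (SUP x\<in>W \<inter> U. d (f x) (g x))"
    unfolding rhoF_common_domain
    using W SUP_dist_nonneg by (intro cInf_lower bdd_belowI2) auto
  also have "\<dots> \<le> c"
    using le open_filter_Int_nonempty[OF filt W U] by (intro cSUP_least) auto
  finally show ?thesis .
qed

end

end

context Metric_space
begin

lemma geometric_steps_dist_le:
  assumes steps: "\<And>j. d (s j) (s (Suc j)) \<le> (1/2)^j" and "range s \<subseteq> M" and "j \<le> m"
  shows "d (s j) (s m) \<le> 2 * (1/2)^j - 2 * (1/2)^m"
  using \<open>j \<le> m\<close>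
proof (induction m rule: dec_induct)
  case base
  then show ?case using \<open>range s \<subseteq> M\<close> by (simp add: image_subset_iff)
next
  case (step n)
  have "d (s j) (s (Suc n)) \<le> d (s j) (s n) + d (s n) (s (Suc n))"
    using \<open>range s \<subseteq> M\<close> by (intro triangle) auto
  also have "\<dots> \<le> (2 * (1/2)^j - 2 * (1/2)^n) + (1/2)^n"
    using step.IH steps by (rule add_mono)
  finally show ?case by simp
qed

lemma mcomplete_geometric_steps_limit:
  assumes "mcomplete" and steps: "\<And>j. d (s j) (s (Suc j)) \<le> (1/2)^j" and "range s \<subseteq> M"
  shows "\<exists>l\<in>M. \<forall>j. d (s j) l \<le> 2 * (1/2)^j"
proof -
  have tail: "d (s j) (s m) \<le> 2 * (1/2)^j" if "j \<le> m" for j m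
    using geometric_steps_dist_le[OF steps \<open>range s \<subseteq> M\<close> that]
      zero_le_power[of "1/2::real" m] by linarith
  have "MCauchy s"
    unfolding MCauchy_def
  proof (intro conjI allI impI)
    fix \<epsilon> :: real assume "\<epsilon> > 0"
    then obtain k where k: "(1/2::real)^k < \<epsilon>/4"
      using real_arch_pow_inv[of "\<epsilon>/4" "1/2"] by auto
    have "d (s n) (s n') < \<epsilon>" if "k \<le> n" "k \<le> n'" for n n'
    proof -
      have "d (s n) (s n') \<le> d (s k) (s n) + d (s k) (s n')"
        using \<open>range s \<subseteq> M\<close> triangle''[of "s n" "s k" "s n'"] by auto
      also have "\<dots> \<le> 2 * (1/2)^k + 2 * (1/2)^k"
        using tail that by (intro add_mono)
      finally show ?thesis using k by simp
    qed
    then show "\<exists>N. \<forall>n n'. N \<le> n \<longrightarrow> N \<le> n' \<longrightarrow> d (s n) (s n') < \<epsilon>" by blast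
  qed (use \<open>range s \<subseteq> M\<close> in auto)
  then obtain l where lim: "limitin mtopology s l sequentially"
    using \<open>mcomplete\<close> unfolding mcomplete_def by blast
  have "l \<in> M" using limitin_mspace[OF lim] .
  have "d (s j) l \<le> 2 * (1/2)^j" for j
  proof (rule tendsto_lowerbound)
    have "(\<lambda>m. d (s m) l) \<longlonglongrightarrow> 0"
      using lim unfolding limitin_metric_dist_null by blast
    from tendsto_add[OF tendsto_const this]
    show "(\<lambda>m. 2 * (1/2)^j + d (s m) l) \<longlonglongrightarrow> 2 * (1/2)^j" by simp
    have "d (s j) l \<le> 2 * (1/2)^j + d (s m) l" if "j \<le> m" for m
    proof -
      have "s j \<in> M" "s m \<in> M" using \<open>range s \<subseteq> M\<close> by auto
      then show ?thesis using triangle[of "s j" "s m" l] tail[OF that] \<open>l \<in> M\<close> by linarith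
    qed
    then show "\<forall>\<^sub>F m in sequentially. d (s j) l \<le> 2 * (1/2)^j + d (s m) l"
      unfolding eventually_sequentially by blast
  qed simp
  with \<open>l \<in> M\<close> show ?thesis by blast
qed

end

lemma Cauchy_geometric_subseq:
  fixes r :: "nat \<Rightarrow> nat \<Rightarrow> real"
  assumes "\<forall>\<epsilon>>0. \<exists>N. \<forall>m\<ge>N. \<forall>n\<ge>N. r m n < \<epsilon>"
  obtains N :: "nat \<Rightarrow> nat"
  where "mono N" and "\<And>k m n. N k \<le> m \<Longrightarrow> N k \<le> n \<Longrightarrow> r m n < (1/2)^k"
proof -
  have "\<forall>k. \<exists>N. \<forall>m\<ge>N. \<forall>n\<ge>N. r m n < (1/2)^k"
    using assms by simp
  then obtain L where L: "\<And>k m n. L k \<le> m \<Longrightarrow> L k \<le> n \<Longrightarrow> r m n < (1/2)^k"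
    by metis
  define N where "N k = (\<Sum>i\<le>k. L i)" for k
  have "mono N"
    unfolding N_def by (intro monoI sum_mono2) auto
  moreover have "L k \<le> N k" for k
    unfolding N_def by (rule member_le_sum) auto
  ultimately show thesis
    using L that by (meson order_trans)
qed

lemma pointwise_limit_of_geometric_chain:
  fixes d :: "'e \<Rightarrow> 'e \<Rightarrow> real" and f :: "nat \<Rightarrow> 'x \<Rightarrow> 'e"
  assumes complete: "\<And>x. x \<in> U \<Longrightarrow> Metric_space (M x) d \<and> Metric_space.mcomplete (M x) d"
    and f_in: "\<And>j x. x \<in> U \<Longrightarrow> f j x \<in> M x"
    and T_sub: "\<And>j. T j \<subseteq> U" and T_dec: "\<And>j. T (Suc j) \<subseteq> T j"
    and steps: "\<And>j x. x \<in> T (Suc j) \<Longrightarrow> d (f j x) (f (Suc j) x) \<le> (1/2)^j"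
  shows "\<exists>\<mu>. (\<forall>x\<in>U. \<mu> x \<in> M x) \<and> (\<forall>j. \<forall>x\<in>T j. d (f j x) (\<mu> x) \<le> 2 * (1/2)^j)"
proof -
  \<comment> \<open>Follow \<open>f j x\<close> as long as \<open>x\<close> stays in the chain, then freeze.\<close>
  define s where "s = rec_nat (f 0) (\<lambda>j s x. if x \<in> T (Suc j) then f (Suc j) x else s x)"
  have s_Suc: "s (Suc j) x = (if x \<in> T (Suc j) then f (Suc j) x else s j x)" for j x
    by (simp add: s_def)
  have s_T: "s j x = f j x" if "x \<in> T j" for j x
    using that by (cases j) (simp_all add: s_def)
  have s_in: "s j x \<in> M x" if "x \<in> U" for j x
    using that by (induction j) (simp_all add: s_def f_in)
  have "\<exists>l\<in>M x. \<forall>j. d (s j x) l \<le> 2 * (1/2)^j" if x: "x \<in> U" for x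
  proof -
    interpret Metric_space "M x" d using complete[OF x] by blast
    have "d (s j x) (s (Suc j) x) \<le> (1/2)^j" for j
    proof (cases "x \<in> T (Suc j)")
      case True
      then have "x \<in> T j" using T_dec by blast
      then show ?thesis using True s_T steps s_Suc by simp
    next
      case False
      then show ?thesis using s_Suc s_in[OF x] by simp
    qed
    moreover have "range (\<lambda>j. s j x) \<subseteq> M x" using s_in[OF x] by blast
    ultimately show ?thesis
      using mcomplete_geometric_steps_limit[of "\<lambda>j. s j x"] complete[OF x] by blast
  qed
  then obtain \<mu> where \<mu>: "\<And>x. x \<in> U \<Longrightarrow> \<mu> x \<in> M x \<and> (\<forall>j. d (s j x) (\<mu> x) \<le> 2 * (1/2)^j)"
    by metis
  have "d (f j x) (\<mu> x) \<le> 2 * (1/2)^j" if "x \<in> T j" for j x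
    using \<mu> s_T[OF that] that T_sub by (metis subsetD)
  with \<mu> show ?thesis by blast
qed

lemma fiberwise_dist_bounded:
  assumes "\<And>x. x \<in> U \<Longrightarrow> Metric_space (M x) d \<and> (\<forall>a\<in>M x. \<forall>b\<in>M x. d a b \<le> 1)"
    and "\<forall>x\<in>U. f x \<in> M x" and "\<forall>x\<in>U. g x \<in> M x"
  shows "\<forall>x\<in>U. 0 \<le> d (f x) (g x) \<and> d (f x) (g x) \<le> 1"
  using assms Metric_space.nonneg by metis

lemma rhoF_Cauchy_geometric_approximation:
  fixes d :: "'e \<Rightarrow> 'e \<Rightarrow> real" and \<sigma> :: "nat \<Rightarrow> 'x \<Rightarrow> 'e"
  assumes filt: "open_filter X \<F>" and U: "U \<in> \<F>"
    and fibers: "\<And>x. x \<in> U \<Longrightarrow> Metric_space (M x) d \<and> Metric_space.mcomplete (M x) d \<and>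
                          (\<forall>a\<in>M x. \<forall>b\<in>M x. d a b \<le> 1)"
    and \<sigma>_in: "\<And>n x. x \<in> U \<Longrightarrow> \<sigma> n x \<in> M x"
    and cauchy: "\<forall>\<epsilon>>0. \<exists>N. \<forall>m\<ge>N. \<forall>n\<ge>N. rhoF \<F> d U (\<sigma> m) U (\<sigma> n) < \<epsilon>"
  obtains N T \<mu>
  where "\<And>k m n. N k \<le> m \<Longrightarrow> N k \<le> n \<Longrightarrow> rhoF \<F> d U (\<sigma> m) U (\<sigma> n) < (1/2)^k"
    and "\<And>j. T j \<in> \<F>" and "\<forall>x\<in>U. \<mu> x \<in> M x"
    and "\<And>j x. x \<in> T j \<Longrightarrow> d (\<sigma> (N j) x) (\<mu> x) \<le> 2 * (1/2)^j"
proof -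
  obtain N where "mono N"
    and N: "\<And>k m n. N k \<le> m \<Longrightarrow> N k \<le> n \<Longrightarrow> rhoF \<F> d U (\<sigma> m) U (\<sigma> n) < (1/2)^k"
    using Cauchy_geometric_subseq[OF cauchy] by blast
  have "\<exists>W\<in>\<F>. \<forall>x\<in>W \<inter> U. d (\<sigma> (N k) x) (\<sigma> (N (Suc k)) x) < (1/2)^k" for k
  proof (rule rhoF_less_imp_eventually_less[where d = d and f = "\<sigma> (N k)" and g = "\<sigma> (N (Suc k))", OF U])
    show "\<forall>x\<in>U. 0 \<le> d (\<sigma> (N k) x) (\<sigma> (N (Suc k)) x) \<and> d (\<sigma> (N k) x) (\<sigma> (N (Suc k)) x) \<le> 1"
      using fibers \<sigma>_in by (intro fiberwise_dist_bounded[of U M d]) auto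
    show "rhoF \<F> d U (\<sigma> (N k)) U (\<sigma> (N (Suc k))) < (1/2)^k"
      using \<open>mono N\<close> by (intro N[OF order_refl]) (simp add: monoD)
  qed
  then obtain W where W: "\<And>k. W k \<in> \<F>"
    and W_close: "\<And>k x. x \<in> W k \<inter> U \<Longrightarrow> d (\<sigma> (N k) x) (\<sigma> (N (Suc k)) x) < (1/2)^k"
    by metis
  define T where "T j = U \<inter> (\<Inter>i<j. W i)" for j
  have T_0: "T 0 = U" and T_Suc: "T (Suc j) = T j \<inter> W j" for j
    by (auto simp: T_def lessThan_Suc)
  have T: "T j \<in> \<F>" for j
    by (induction j) (simp_all add: T_0 T_Suc U W open_filter_Int[OF filt])
  have T_sub: "T j \<subseteq> U" for j
    by (simp add: T_def)
  have T_steps: "d (\<sigma> (N j) x) (\<sigma> (N (Suc j)) x) \<le> (1/2)^j" if "x \<in> T (Suc j)" for j x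
    using W_close[of x j] that T_sub[of j] by (auto simp: T_Suc less_imp_le)
  obtain \<mu> where \<mu>_in: "\<forall>x\<in>U. \<mu> x \<in> M x"
    and \<mu>_close: "\<And>j x. x \<in> T j \<Longrightarrow> d (\<sigma> (N j) x) (\<mu> x) \<le> 2 * (1/2)^j"
    using pointwise_limit_of_geometric_chain[of U M d "\<lambda>j. \<sigma> (N j)" T] fibers \<sigma>_in
      T_sub T_steps by (auto simp: T_Suc)
  show thesis
    by (rule that[OF N T \<mu>_in \<mu>_close])
qed

lemma rhoF_Cauchy_imp_limit:
  fixes d :: "'e \<Rightarrow> 'e \<Rightarrow> real" and \<sigma> :: "nat \<Rightarrow> 'x \<Rightarrow> 'e"
  assumes filt: "open_filter X \<F>" and U: "U \<in> \<F>"
    and fibers: "\<And>x. x \<in> U \<Longrightarrow> Metric_space (M x) d \<and> Metric_space.mcomplete (M x) d \<and>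
                          (\<forall>a\<in>M x. \<forall>b\<in>M x. d a b \<le> 1)"
    and \<sigma>_in: "\<And>n x. x \<in> U \<Longrightarrow> \<sigma> n x \<in> M x"
    and cauchy: "\<forall>\<epsilon>>0. \<exists>N. \<forall>m\<ge>N. \<forall>n\<ge>N. rhoF \<F> d U (\<sigma> m) U (\<sigma> n) < \<epsilon>"
  shows "\<exists>\<mu>. (\<forall>x\<in>U. \<mu> x \<in> M x) \<and> (\<lambda>n. rhoF \<F> d U (\<sigma> n) U \<mu>) \<longlonglongrightarrow> 0"
proof -
  obtain N T \<mu>
    where N: "\<And>k m n. N k \<le> m \<Longrightarrow> N k \<le> n \<Longrightarrow> rhoF \<F> d U (\<sigma> m) U (\<sigma> n) < (1/2)^k"
      and T: "\<And>j. T j \<in> \<F>" and \<mu>_in: "\<forall>x\<in>U. \<mu> x \<in> M x"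
      and \<mu>_close: "\<And>j x. x \<in> T j \<Longrightarrow> d (\<sigma> (N j) x) (\<mu> x) \<le> 2 * (1/2)^j"
    using rhoF_Cauchy_geometric_approximation[OF filt U fibers \<sigma>_in cauchy] by blast
  have bounded: "\<forall>x\<in>U. 0 \<le> d (f x) (g x) \<and> d (f x) (g x) \<le> 1"
    if "\<forall>x\<in>U. f x \<in> M x" "\<forall>x\<in>U. g x \<in> M x" for f g
    using fibers that by (intro fiberwise_dist_bounded[of U M d]) auto
  have triangle: "d a c \<le> d a b + d b c" if "x \<in> U" "a \<in> M x" "b \<in> M x" "c \<in> M x" for x a b c
    using that fibers Metric_space.triangle by metis
  have rhoF_bound: "rhoF \<F> d U (\<sigma> n) U \<mu> \<le> 3 * (1/2)^k" if n: "N k \<le> n" for k n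
  proof -
    obtain V where V: "V \<in> \<F>" and V_close: "\<forall>x\<in>V \<inter> U. d (\<sigma> n x) (\<sigma> (N k) x) < (1/2)^k"
      using rhoF_less_imp_eventually_less[where d = d and f = "\<sigma> n" and g = "\<sigma> (N k)", OF U bounded]
        N[OF n order_refl] \<sigma>_in by blast
    have "d (\<sigma> n x) (\<mu> x) \<le> 3 * (1/2)^k" if x: "x \<in> (V \<inter> T k) \<inter> U" for x
    proof -
      have "d (\<sigma> n x) (\<mu> x) \<le> d (\<sigma> n x) (\<sigma> (N k) x) + d (\<sigma> (N k) x) (\<mu> x)"
        using x \<sigma>_in \<mu>_in by (intro triangle[of x]) auto
      moreover have "d (\<sigma> n x) (\<sigma> (N k) x) < (1/2)^k" using V_close x by blast
      moreover have "d (\<sigma> (N k) x) (\<mu> x) \<le> 2 * (1/2)^k" using \<mu>_close x by blast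
      ultimately show ?thesis by linarith
    qed
    then show ?thesis
      using rhoF_le_if_eventually_le[where d = d and f = "\<sigma> n" and g = \<mu>, OF U bounded filt
          open_filter_Int[OF filt V T]] \<sigma>_in \<mu>_in
      by blast
  qed
  have "(\<lambda>n. rhoF \<F> d U (\<sigma> n) U \<mu>) \<longlonglongrightarrow> 0"
  proof (rule LIMSEQ_I)
    fix r :: real assume "r > 0"
    then obtain k where k: "(1/2::real)^k < r/3"
      using real_arch_pow_inv[of "r/3" "1/2"] by auto
    have "norm (rhoF \<F> d U (\<sigma> n) U \<mu>) < r" if "N k \<le> n" for n
      using rhoF_bound[OF that] k
        rhoF_nonneg[where d = d and f = "\<sigma> n" and g = \<mu>, OF U bounded filt] \<sigma>_in \<mu>_in by auto
    then show "\<exists>n0. \<forall>n\<ge>n0. norm (rhoF \<F> d U (\<sigma> n) U \<mu> - 0) < r" by auto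
  qed
  with \<mu>_in show ?thesis by blast
qed

lemma local_homeomorphism_local_inverse:
  assumes "local_homeomorphism E X p" and "e \<in> topspace E"
  obtains W g where "openin E W" and "e \<in> W"
    and "\<And>S. openin E S \<Longrightarrow> S \<subseteq> W \<Longrightarrow> openin X (p ` S)"
    and "continuous_map (subtopology X (p ` W)) E g"
    and "\<And>e'. e' \<in> W \<Longrightarrow> g (p e') = e'"
proof -
  obtain W where W: "openin E W" "e \<in> W" "openin X (p ` W)"
    and hom: "homeomorphic_map (subtopology E W) (subtopology X (p ` W)) p"
    using assms unfolding local_homeomorphism_def by blast
  obtain g where g: "homeomorphic_maps (subtopology E W) (subtopology X (p ` W)) p g"
    using hom homeomorphic_map_maps by blast
  have "openin X (p ` S)" if "openin E S" "S \<subseteq> W" for S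
  proof -
    have "openin (subtopology E W) S"
      using that W(1) openin_open_subtopology by blast
    then have "openin (subtopology X (p ` W)) (p ` S)"
      using homeomorphic_imp_open_map[OF hom] unfolding open_map_def by blast
    then show ?thesis using W(3) openin_trans_full by blast
  qed
  moreover have "continuous_map (subtopology X (p ` W)) E g"
    using g continuous_map_into_fulltopology unfolding homeomorphic_maps_def by blast
  moreover have "g (p e') = e'" if "e' \<in> W" for e'
    using g that openin_subset[OF W(1)] unfolding homeomorphic_maps_def by auto
  ultimately show thesis using that W(1,2) by blast
qed

lemma local_homeomorphism_interior_image_imp_continuous_on_open:
  assumes lh: "local_homeomorphism E X p"
    and \<mu>: "\<forall>x\<in>U. p (\<mu> x) = x"
    and interior: "E interior_of (\<mu> ` U) \<noteq> {}"
  shows "\<exists>V. openin X V \<and> V \<noteq> {} \<and> V \<subseteq> U \<and> continuous_map (subtopology X V) E \<mu>"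
proof -
  obtain e where e: "e \<in> E interior_of (\<mu> ` U)"
    using interior by blast
  then have "e \<in> topspace E"
    using interior_of_subset_topspace[of E "\<mu> ` U"] by blast
  then obtain W g where W: "openin E W" "e \<in> W"
    and open_image: "\<And>S. openin E S \<Longrightarrow> S \<subseteq> W \<Longrightarrow> openin X (p ` S)"
    and g: "continuous_map (subtopology X (p ` W)) E g"
    and g_inverse: "\<And>e'. e' \<in> W \<Longrightarrow> g (p e') = e'"
    using local_homeomorphism_local_inverse[OF lh] by blast
  define S where "S = E interior_of (\<mu> ` U) \<inter> W"
  have "openin E S" and "S \<subseteq> W" and "e \<in> S"
    using W e by (auto simp: S_def)
  have in_image: "p e' \<in> U \<and> \<mu> (p e') = e'" if "e' \<in> S" for e'
    using that interior_of_subset[of E "\<mu> ` U"] \<mu> by (auto simp: S_def)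
  have "continuous_map (subtopology X (p ` S)) E g"
    using continuous_map_from_subtopology_mono[OF g] \<open>S \<subseteq> W\<close> by blast
  moreover have "g y = \<mu> y" if "y \<in> topspace (subtopology X (p ` S))" for y
    using that in_image g_inverse \<open>S \<subseteq> W\<close> by auto
  ultimately have "continuous_map (subtopology X (p ` S)) E \<mu>"
    using continuous_map_eq by blast
  moreover have "openin X (p ` S)"
    using open_image \<open>openin E S\<close> \<open>S \<subseteq> W\<close> by blast
  ultimately show ?thesis
    using in_image \<open>e \<in> S\<close> by blast
qed

lemma is_section_in_fiber: "is_section X E p U \<sigma> \<Longrightarrow> x \<in> U \<Longrightarrow> \<sigma> x \<in> fiber E p x"
  unfolding is_section_def fiber_def
  using continuous_map_image_subset_topspace openin_subset by fastforce

theorem mainTheorem4: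
  fixes X :: "'x topology" and E :: "'e topology" and p :: "'e \<Rightarrow> 'x"
    and d :: "'e \<Rightarrow> 'e \<Rightarrow> real"
    and arP :: "'r \<Rightarrow> nat" and P :: "'r \<Rightarrow> 'e list \<Rightarrow> real"
    and arF :: "'f \<Rightarrow> nat" and F :: "'f \<Rightarrow> 'e list \<Rightarrow> 'e"
    and C :: "'c \<Rightarrow> 'x \<Rightarrow> 'e"
    and \<F> :: "'x set set" and U :: "'x set" and \<sigma> :: "nat \<Rightarrow> 'x \<Rightarrow> 'e"
  assumes sheaf: "sheaf_metric_structure X E p d arP P arF F C"
    and filt: "open_filter X \<F>"
    and U: "U \<in> \<F>"
    and sec: "\<And>n. is_section X E p U (\<sigma> n)"
    and cauchy: "\<forall>\<epsilon>>0. \<exists>N. \<forall>m\<ge>N. \<forall>n\<ge>N. rhoF \<F> d U (\<sigma> m) U (\<sigma> n) < \<epsilon>"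
  shows "\<exists>\<mu>. (\<forall>x\<in>U. \<mu> x \<in> fiber E p x) \<and>
             (\<lambda>n. rhoF \<F> d U (\<sigma> n) U \<mu>) \<longlonglongrightarrow> 0 \<and>
             (regular_space X \<and> E interior_of (\<mu> ` U) \<noteq> {} \<longrightarrow>
                (\<exists>V. openin X V \<and> V \<noteq> {} \<and> V \<subseteq> U \<and>
                     continuous_map (subtopology X V) E \<mu>))"
proof -
  have lh: "local_homeomorphism E X p"
    using sheaf unfolding sheaf_metric_structure_def by (rule conjunct1)
  have fibers_X: "\<forall>x\<in>topspace X. fiber E p x \<noteq> {} \<and>
        Metric_space (fiber E p x) d \<and> Metric_space.mcomplete (fiber E p x) d \<and>
        (\<forall>a\<in>fiber E p x. \<forall>b\<in>fiber E p x. d a b \<le> 1)"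
    using sheaf unfolding sheaf_metric_structure_def by (elim conjE) assumption
  have "openin X U"
    using filt U unfolding open_filter_def by blast
  then have "U \<subseteq> topspace X"
    by (rule openin_subset)
  then have fibers: "\<And>x. x \<in> U \<Longrightarrow> Metric_space (fiber E p x) d \<and>
      Metric_space.mcomplete (fiber E p x) d \<and> (\<forall>a\<in>fiber E p x. \<forall>b\<in>fiber E p x. d a b \<le> 1)"
    using fibers_X[rule_format, OF subsetD[OF \<open>U \<subseteq> topspace X\<close>]] by simp
  obtain \<mu> where \<mu>_in: "\<forall>x\<in>U. \<mu> x \<in> fiber E p x"
    and lim: "(\<lambda>n. rhoF \<F> d U (\<sigma> n) U \<mu>) \<longlonglongrightarrow> 0"
    using rhoF_Cauchy_imp_limit[OF filt U fibers is_section_in_fiber[OF sec] cauchy] by blast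
  have "\<forall>x\<in>U. p (\<mu> x) = x"
    using \<mu>_in by (simp add: fiber_def)
  then have "E interior_of (\<mu> ` U) \<noteq> {} \<Longrightarrow>
      \<exists>V. openin X V \<and> V \<noteq> {} \<and> V \<subseteq> U \<and> continuous_map (subtopology X V) E \<mu>"
    by (rule local_homeomorphism_interior_image_imp_continuous_on_open[OF lh])
  with \<mu>_in lim show ?thesis
    by blast
qed

end
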